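(* Let $\mathcal{K}$ be a learning space (respectively, a well-graded $\cup$-closed family) on a domain $Q=\bigcup\mathcal{K}$ with $|Q|\ge 2$, and let $Q'$ be a proper non-empty subset of $Q$. Then: (i) the projection $\mathcal{K}_{|Q'}$ is a learning space (respectively, a well-graded $\cup$-closed family); (ii) in either case, every $Q'$-child of $\mathcal{K}$ is a well-graded $\cup$-closed family.
   Context: All sets are finite. $d(K,L)=|K\triangle L|$. A family is well-graded if any two distinct members $K,L$ are joined by a sequence $K_0=K,\dots,K_n=L$ of members with $n=d(K,L)$ and $d(K_i,K_{i+1})=1$. A family is $\cup$-closed if the union of any non-empty subfamily belongs to it. A knowledge structure is a family $\mathcal{K}$ of subsets of $Q=\bigcup\mathcal{K}\neq\varnothing$ with $\varnothing\in\mathcal{K}$. A learning space is a knowledge structure satisfying: [L1] for $K\subset L$ in $\mathcal{K}$ with $|L\setminus K|=n$ there is a chain $K=K_0\subset\dots\subset K_n=L$ with $K_{i+1}=K_i\cup\{q_i\}\in\mathcal{K}$, $q_i\notin K_i$; [L2] if $K\subset L$ in $\mathcal{K}$ and $K\cup\{q\}\in\mathcal{K}$ with $q\notin K$ then $L\cup\{q\}\in\mathcal{K}$. For $Q'\subset Q$: $K\sim L$ iff $K\cap Q'=L\cap Q'$, $[K]$ the equivalence class of $K$; projection $\mathcal{K}_{|Q'}=\{K\cap Q':K\in\mathcal{K}\}$; the $Q'$-child of $\mathcal{K}$ determined by $K$ is $\mathcal{K}_{[K]}=\{L\setminus\bigcap[K]: L\in\mathcal{K}, L\sim K\}$ (it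 may equal $\{\varnothing\}$, which is regarded as well-graded and $\cup$-closed). *)

theory Defs
  imports Main
begin

definition sdist :: "'a set \<Rightarrow> 'a set \<Rightarrow> nat" where
  "sdist K L = card ((K - L) \<union> (L - K))"

definition well_graded :: "'a set set \<Rightarrow> bool" where
  "well_graded F \<longleftrightarrow> (\<forall>K\<in>F. \<forall>L\<in>F. K \<noteq> L \<longrightarrow>
     (\<exists>f :: nat \<Rightarrow> 'a set. f 0 = K \<and> f (sdist K L) = L \<and>
        (\<forall>i\<le>sdist K L. f i \<in> F) \<and>
        (\<forall>i<sdist K L. sdist (f i) (f (Suc i)) = 1)))"

definition union_closed :: "'a set set \<Rightarrow> bool" where
  "union_closed F \<longleftrightarrow> (\<forall>S. S \<subseteq> F \<and> S \<noteq> {} \<longrightarrow> \<Union>S \<in> F)"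

definition knowledge_structure :: "'a set set \<Rightarrow> bool" where
  "knowledge_structure F \<longleftrightarrow> \<Union>F \<noteq> {} \<and> {} \<in> F"

definition axiom_L1 :: "'a set set \<Rightarrow> bool" where
  "axiom_L1 F \<longleftrightarrow> (\<forall>K\<in>F. \<forall>L\<in>F. K \<subset> L \<longrightarrow>
     (\<exists>f :: nat \<Rightarrow> 'a set. f 0 = K \<and> f (card (L - K)) = L \<and>
        (\<forall>i\<le>card (L - K). f i \<in> F) \<and>
        (\<forall>i<card (L - K). \<exists>q. q \<notin> f i \<and> f (Suc i) = insert q (f i))))"

definition axiom_L2 :: "'a set set \<Rightarrow> bool" where
  "axiom_L2 F \<longleftrightarrow> (\<forall>K\<in>F. \<forall>L\<in>F. \<forall>q. K \<subset> L \<and> q \<notin> K \<and> insert q K \<in> F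
      \<longrightarrow> insert q L \<in> F)"

definition learning_space :: "'a set set \<Rightarrow> bool" where
  "learning_space F \<longleftrightarrow> knowledge_structure F \<and> axiom_L1 F \<and> axiom_L2 F"

definition projection :: "'a set set \<Rightarrow> 'a set \<Rightarrow> 'a set set" where
  "projection F Q' = (\<lambda>K. K \<inter> Q') ` F"

definition equiv_class :: "'a set set \<Rightarrow> 'a set \<Rightarrow> 'a set \<Rightarrow> 'a set set" where
  "equiv_class F Q' K = {L \<in> F. L \<inter> Q' = K \<inter> Q'}"

definition child :: "'a set set \<Rightarrow> 'a set \<Rightarrow> 'a set \<Rightarrow> 'a set set" where
  "child F Q' K = (\<lambda>L. L - \<Inter>(equiv_class F Q' K)) ` equiv_class F Q' K"

end

(*
  For families of finite sets, well-gradedness is equivalent to a local condition: for distinct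
  members K and L, toggling some element of the symmetric difference of K and L turns K into a
  member again. This condition and union-closure pass to projections (a toggle outside Q' leaves
  the trace on Q' unchanged, so one keeps walking towards L until a toggle inside Q' occurs), to
  the classes [K] (toggles between equivalent sets happen outside Q'), and to children (deleting
  the common core \<Inter>[K] commutes with both). For finite families containing the empty set,
  learning spaces are exactly the well-graded union-closed families, which reduces the
  learning-space half of the theorem to the other half.
*)
theory Submission
  imports Defs
begin

lemma sdist_eq_0_iff: "finite K \<Longrightarrow> finite L \<Longrightarrow> sdist K L = 0 \<longleftrightarrow> K = L"
  by (auto simp: sdist_def)

lemma sdist_triangle:
  assumes "finite A" "finite B" "finite C"
  shows "sdist A C \<le> sdist A B + sdist B C"
proof -
  have "sdist A C \<le> card (sym_diff A B \<union> sym_diff B C)"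
    unfolding sdist_def by (rule card_mono) (use assms in auto)
  also have "\<dots> \<le> sdist A B + sdist B C"
    unfolding sdist_def by (rule card_Un_le)
  finally show ?thesis .
qed

lemma sdist_toggle:
  assumes "finite K" "finite L"
  shows "sdist (sym_diff K {y}) L = (if y \<in> sym_diff K L then sdist K L - 1 else Suc (sdist K L))"
proof -
  have "sym_diff (sym_diff K {y}) L =
      (if y \<in> sym_diff K L then sym_diff K L - {y} else insert y (sym_diff K L))"
    by auto
  thus ?thesis using assms by (simp add: sdist_def)
qed

lemma sdist_toggle_self: "sdist K (sym_diff K {y}) = 1"
proof -
  have "sym_diff K (sym_diff K {y}) = {y}" by auto
  thus ?thesis by (simp add: sdist_def)
qed

lemma sdist_eq_1_toggle:
  assumes "sdist K M = 1"
  obtains y where "M = sym_diff K {y}"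
proof -
  obtain y where "sym_diff K M = {y}"
    using assms card_1_singletonE unfolding sdist_def by blast
  hence "M = sym_diff K {y}" by blast
  thus thesis by (rule that)
qed

lemma sdist_path_le:
  assumes "\<forall>i<n. sdist (f i) (f (Suc i)) = 1" and "\<forall>i\<le>n. finite (f i)"
  shows "sdist (f 0) (f n) \<le> n"
  using assms
proof (induction n)
  case 0
  thus ?case by (simp add: sdist_def)
next
  case (Suc n)
  have "sdist (f 0) (f (Suc n)) \<le> sdist (f 0) (f n) + sdist (f n) (f (Suc n))"
    using Suc.prems(2) by (intro sdist_triangle) auto
  thus ?case using Suc by simp
qed

lemma all_le_Suc_conv: "(\<forall>i\<le>Suc n. P i) \<longleftrightarrow> P 0 \<and> (\<forall>i\<le>n. P (Suc i))"
  by (metis Suc_le_mono le0 not0_implies_Suc)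

lemma lift_Suc_mono_le_upto:
  fixes f :: "nat \<Rightarrow> 'a::order"
  assumes "\<forall>i<n. f i \<le> f (Suc i)" "i \<le> j" "j \<le> n"
  shows "f i \<le> f j"
  using assms(2,3)
proof (induction j rule: dec_induct)
  case (step m)
  thus ?case using assms(1) by (meson Suc_le_lessD order.trans less_or_eq_imp_le)
qed simp

definition stepwise_graded :: "'a set set \<Rightarrow> bool" where
  "stepwise_graded F \<longleftrightarrow>
     (\<forall>K\<in>F. \<forall>L\<in>F. K \<noteq> L \<longrightarrow> (\<exists>y \<in> sym_diff K L. sym_diff K {y} \<in> F))"

text \<open>The inclusion invariant keeps every set of the path between \<open>K \<inter> L\<close> and \<open>K \<union> L\<close>;
  when \<open>K \<subseteq> L\<close> it makes every step an insertion, which is axiom L1.\<close>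

lemma stepwise_graded_path:
  assumes sg: "stepwise_graded F" and fin: "\<forall>X\<in>F. finite X" and "K \<in> F" "L \<in> F"
  obtains f where "f 0 = K" "f (sdist K L) = L"
    "\<forall>i\<le>sdist K L. f i \<in> F \<and> sym_diff (f i) L \<subseteq> sym_diff K L"
    "\<forall>i<sdist K L. \<exists>y \<in> sym_diff (f i) L. f (Suc i) = sym_diff (f i) {y}"
proof -
  have "\<exists>f. f 0 = K \<and> f n = L \<and> (\<forall>i\<le>n. f i \<in> F \<and> sym_diff (f i) L \<subseteq> sym_diff K L)
      \<and> (\<forall>i<n. \<exists>y \<in> sym_diff (f i) L. f (Suc i) = sym_diff (f i) {y})"
    if "K \<in> F" "sdist K L = n" for n K
    using that
  proof (induction n arbitrary: K)
    case 0
    hence "K = L" using fin \<open>L \<in> F\<close> sdist_eq_0_iff by blast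
    thus ?case using 0 by (intro exI[of _ "\<lambda>_. K"]) auto
  next
    case (Suc n)
    hence "K \<noteq> L" by (auto simp: sdist_def)
    then obtain y where y: "y \<in> sym_diff K L" and K': "sym_diff K {y} \<in> F"
      using sg Suc.prems(1) \<open>L \<in> F\<close> unfolding stepwise_graded_def by blast
    have "sdist (sym_diff K {y}) L = n"
      using y Suc.prems fin \<open>L \<in> F\<close> by (simp add: sdist_toggle)
    from Suc.IH[OF K' this] obtain g where g: "g 0 = sym_diff K {y}" "g n = L"
      "\<forall>i\<le>n. g i \<in> F \<and> sym_diff (g i) L \<subseteq> sym_diff (sym_diff K {y}) L"
      "\<forall>i<n. \<exists>y \<in> sym_diff (g i) L. g (Suc i) = sym_diff (g i) {y}"
      by blast
    define f where "f = case_nat K g"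
    have "sym_diff (sym_diff K {y}) L \<subseteq> sym_diff K L" using y by auto
    hence "\<forall>i\<le>n. g i \<in> F \<and> sym_diff (g i) L \<subseteq> sym_diff K L"
      using g(3) by (meson order.trans)
    hence "\<forall>i\<le>Suc n. f i \<in> F \<and> sym_diff (f i) L \<subseteq> sym_diff K L"
      using Suc.prems(1) unfolding f_def all_le_Suc_conv by simp
    moreover have "\<forall>i<Suc n. \<exists>y \<in> sym_diff (f i) L. f (Suc i) = sym_diff (f i) {y}"
      using g(1,4) y unfolding f_def All_less_Suc2 by auto
    ultimately show ?case using g(2) by (intro exI[of _ f]) (simp add: f_def)
  qed
  thus thesis using that \<open>K \<in> F\<close> by blast
qed

lemma stepwise_graded_imp_well_graded:
  assumes "stepwise_graded F" "\<forall>X\<in>F. finite X"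
  shows "well_graded F"
  unfolding well_graded_def
proof (intro ballI impI)
  fix K L assume "K \<in> F" "L \<in> F"
  with stepwise_graded_path[OF assms] obtain f where f: "f 0 = K" "f (sdist K L) = L"
    "\<forall>i\<le>sdist K L. f i \<in> F \<and> sym_diff (f i) L \<subseteq> sym_diff K L"
    "\<forall>i<sdist K L. \<exists>y \<in> sym_diff (f i) L. f (Suc i) = sym_diff (f i) {y}"
    by blast
  have "sdist (f i) (f (Suc i)) = 1" if i: "i < sdist K L" for i
  proof -
    obtain y where "f (Suc i) = sym_diff (f i) {y}" using f(4) i by blast
    thus ?thesis by (simp add: sdist_toggle_self)
  qed
  with f show "\<exists>f. f 0 = K \<and> f (sdist K L) = L \<and> (\<forall>i\<le>sdist K L. f i \<in> F)
      \<and> (\<forall>i<sdist K L. sdist (f i) (f (Suc i)) = 1)"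
    by (intro exI[of _ f] conjI) (use f in blast)+
qed

lemma well_graded_imp_stepwise_graded:
  assumes wg: "well_graded F" and fin: "\<forall>X\<in>F. finite X"
  shows "stepwise_graded F"
  unfolding stepwise_graded_def
proof (intro ballI impI)
  fix K L assume K: "K \<in> F" and L: "L \<in> F" and "K \<noteq> L"
  define n where "n = sdist K L"
  from wg[unfolded well_graded_def, rule_format, OF K L \<open>K \<noteq> L\<close>, folded n_def]
  obtain f where f: "f 0 = K" "f n = L" "\<forall>i\<le>n. f i \<in> F"
    "\<forall>i<n. sdist (f i) (f (Suc i)) = 1"
    by blast
  have "finite K" "finite L" using fin K L by auto
  hence "n > 0" using \<open>K \<noteq> L\<close> sdist_eq_0_iff[of K L] by (simp add: n_def)
  obtain y where y: "f 1 = sym_diff K {y}"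
    using sdist_eq_1_toggle f(1,4) \<open>n > 0\<close> by (metis One_nat_def)
  have "sdist (f 1) L \<le> n - 1"
    using sdist_path_le[of "n - 1" "\<lambda>i. f (Suc i)"] f(2-4) fin \<open>n > 0\<close> by simp
  hence "y \<in> sym_diff K L"
    using y \<open>finite K\<close> \<open>finite L\<close> \<open>n > 0\<close> by (simp add: sdist_toggle n_def split: if_splits)
  moreover have "sym_diff K {y} \<in> F" using f(3) \<open>n > 0\<close> y by (metis Suc_leI One_nat_def)
  ultimately show "\<exists>y \<in> sym_diff K L. sym_diff K {y} \<in> F" by blast
qed

lemma well_graded_iff_stepwise_graded:
  "\<forall>X\<in>F. finite X \<Longrightarrow> well_graded F \<longleftrightarrow> stepwise_graded F"
  by (metis well_graded_imp_stepwise_graded stepwise_graded_imp_well_graded)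

lemma axiom_L1_chain:
  assumes "axiom_L1 F" "K \<in> F" "L \<in> F" "K \<subset> L" "finite L"
  obtains n f where "n > 0" "f 0 = K" "f n = L" "\<forall>i\<le>n. f i \<in> F"
    "\<forall>i<n. \<exists>q. q \<notin> f i \<and> f (Suc i) = insert q (f i)"
    "\<forall>i\<le>n. \<forall>j\<le>n. i \<le> j \<longrightarrow> f i \<subseteq> f j"
proof -
  from assms(1)[unfolded axiom_L1_def, rule_format, OF assms(2-4)]
  obtain f where f: "f 0 = K" "f (card (L - K)) = L" "\<forall>i\<le>card (L - K). f i \<in> F"
    "\<forall>i<card (L - K). \<exists>q. q \<notin> f i \<and> f (Suc i) = insert q (f i)"
    by blast
  have "card (L - K) > 0" using assms(4,5) by (simp add: card_gt_0_iff)
  moreover have "\<forall>i<card (L - K). f i \<subseteq> f (Suc i)" using f(4) by blast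
  hence "\<forall>i\<le>card (L - K). \<forall>j\<le>card (L - K). i \<le> j \<longrightarrow> f i \<subseteq> f j"
    using lift_Suc_mono_le_upto[of "card (L - K)" f] by blast
  ultimately show thesis using that f by blast
qed

lemma axiom_L1_first_step:
  assumes "axiom_L1 F" "K \<in> F" "L \<in> F" "K \<subset> L" "finite L"
  obtains q where "q \<in> L - K" "insert q K \<in> F"
proof -
  obtain n f where f: "n > 0" "f 0 = K" "f n = L" "\<forall>i\<le>n. f i \<in> F"
    "\<forall>i<n. \<exists>q. q \<notin> f i \<and> f (Suc i) = insert q (f i)"
    "\<forall>i\<le>n. \<forall>j\<le>n. i \<le> j \<longrightarrow> f i \<subseteq> f j"
    using axiom_L1_chain[OF assms] .
  obtain q where q: "q \<notin> K" "f 1 = insert q K" using f(1,2,5) by auto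
  have "f 1 \<subseteq> L" using f(1,3,6) by (metis One_nat_def Suc_leI order_refl)
  hence "q \<in> L - K" using q by auto
  moreover have "insert q K \<in> F" using f(1,4) q(2) by (metis One_nat_def Suc_leI)
  ultimately show thesis by (rule that)
qed

lemma axiom_L1_last_step:
  assumes "axiom_L1 F" "K \<in> F" "L \<in> F" "K \<subset> L" "finite L"
  obtains q where "q \<in> L - K" "L - {q} \<in> F"
proof -
  obtain n f where f: "n > 0" "f 0 = K" "f n = L" "\<forall>i\<le>n. f i \<in> F"
    "\<forall>i<n. \<exists>q. q \<notin> f i \<and> f (Suc i) = insert q (f i)"
    "\<forall>i\<le>n. \<forall>j\<le>n. i \<le> j \<longrightarrow> f i \<subseteq> f j"
    using axiom_L1_chain[OF assms] .
  have n: "Suc (n - 1) = n" using f(1) by simp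
  obtain q where q: "q \<notin> f (n - 1)" "L = insert q (f (n - 1))"
    using f(3,5) n by (metis diff_less less_one f(1))
  have "K \<subseteq> f (n - 1)" using f(2,6) by (metis diff_le_self le0)
  hence "q \<in> L - K" using q by blast
  moreover have "L - {q} = f (n - 1)" using q by auto
  hence "L - {q} \<in> F" using f(4) by simp
  ultimately show thesis by (rule that)
qed

lemma axioms_L1_L2_Un:
  assumes L1: "axiom_L1 F" and L2: "axiom_L2 F" and "{} \<in> F"
    and "K \<in> F" "L \<in> F" "finite K"
  shows "L \<union> K \<in> F"
  using \<open>finite K\<close> \<open>K \<in> F\<close>
proof (induction K rule: finite_psubset_induct)
  case (psubset K)
  show ?case
  proof (cases "K = {}")
    case True
    thus ?thesis using \<open>L \<in> F\<close> by simp
  next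
    case False
    then obtain q where q: "q \<in> K" and K': "K - {q} \<in> F"
      using axiom_L1_last_step[OF L1 \<open>{} \<in> F\<close> psubset.prems _ psubset.hyps] by blast
    have IH: "L \<union> (K - {q}) \<in> F" using psubset.IH q K' by blast
    consider "q \<in> L" | "L \<subseteq> K - {q}" | "q \<notin> L" "\<not> L \<subseteq> K - {q}" by blast
    thus ?thesis
    proof cases
      case 1
      hence "L \<union> K = L \<union> (K - {q})" by blast
      thus ?thesis using IH by simp
    next
      case 2
      hence "L \<union> K = K" by blast
      thus ?thesis using psubset.prems by simp
    next
      case 3
      have "K - {q} \<subset> L \<union> (K - {q})" using 3 by blast
      moreover have "insert q (K - {q}) \<in> F" using psubset.prems q by (simp add: insert_absorb)
      ultimately have "insert q (L \<union> (K - {q})) \<in> F"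
        using L2[unfolded axiom_L2_def, rule_format, OF K' IH] by blast
      moreover have "insert q (L \<union> (K - {q})) = L \<union> K" using q by blast
      ultimately show ?thesis by simp
    qed
  qed
qed

lemma axioms_L1_L2_union_closed:
  assumes "axiom_L1 F" "axiom_L2 F" "{} \<in> F" "finite F" "\<forall>X\<in>F. finite X"
  shows "union_closed F"
  unfolding union_closed_def
proof (intro allI impI)
  fix S assume "S \<subseteq> F \<and> S \<noteq> {}"
  hence "finite S" "S \<noteq> {}" "S \<subseteq> F" using \<open>finite F\<close> finite_subset by auto
  thus "\<Union>S \<in> F"
  proof (induction S rule: finite_ne_induct)
    case (insert K S)
    hence "\<Union>S \<union> K \<in> F" using axioms_L1_L2_Un[OF assms(1-3)] assms(5) by blast
    thus ?case by (simp add: Un_commute)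
  qed simp
qed

lemma axioms_L1_L2_stepwise_graded:
  assumes L1: "axiom_L1 F" and L2: "axiom_L2 F" and "{} \<in> F" and fin: "\<forall>X\<in>F. finite X"
  shows "stepwise_graded F"
  unfolding stepwise_graded_def
proof (intro ballI impI)
  fix K L assume K: "K \<in> F" and L: "L \<in> F" and "K \<noteq> L"
  show "\<exists>y \<in> sym_diff K L. sym_diff K {y} \<in> F"
  proof (cases "L \<subseteq> K")
    case False
    have "K \<union> L \<in> F" using axioms_L1_L2_Un[OF L1 L2 \<open>{} \<in> F\<close> L K] fin L by blast
    moreover have "K \<subset> K \<union> L" "finite (K \<union> L)" using False fin K L by auto
    ultimately obtain q where "q \<in> L - K" "insert q K \<in> F"
      using axiom_L1_first_step[OF L1 K] by blast
    moreover have "sym_diff K {q} = insert q K" using \<open>q \<in> L - K\<close> by blast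
    ultimately show ?thesis by (intro bexI[of _ q]) auto
  next
    case True
    hence "L \<subset> K" using \<open>K \<noteq> L\<close> by blast
    then obtain q where "q \<in> K - L" "K - {q} \<in> F"
      using axiom_L1_last_step[OF L1 L K] fin K by blast
    moreover have "sym_diff K {q} = K - {q}" using \<open>q \<in> K - L\<close> by blast
    ultimately show ?thesis by (intro bexI[of _ q]) auto
  qed
qed

lemma stepwise_graded_axiom_L1:
  assumes "stepwise_graded F" "\<forall>X\<in>F. finite X"
  shows "axiom_L1 F"
  unfolding axiom_L1_def
proof (intro ballI impI)
  fix K L assume "K \<in> F" "L \<in> F" "K \<subset> L"
  with stepwise_graded_path[OF assms] obtain f where f: "f 0 = K" "f (sdist K L) = L"
    "\<forall>i\<le>sdist K L. f i \<in> F \<and> sym_diff (f i) L \<subseteq> sym_diff K L"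
    "\<forall>i<sdist K L. \<exists>y \<in> sym_diff (f i) L. f (Suc i) = sym_diff (f i) {y}"
    by blast
  have d: "sdist K L = card (L - K)"
    using \<open>K \<subset> L\<close> by (simp add: sdist_def Diff_eq_empty_iff[THEN iffD2])
  have "\<exists>q. q \<notin> f i \<and> f (Suc i) = insert q (f i)" if i: "i < sdist K L" for i
  proof -
    obtain y where y: "y \<in> sym_diff (f i) L" "f (Suc i) = sym_diff (f i) {y}"
      using f(4) i by blast
    have "sym_diff K L = L - K" using \<open>K \<subset> L\<close> by blast
    hence "sym_diff (f i) L \<subseteq> L - K" using f(3) i by (metis less_imp_le)
    hence "y \<notin> f i" using y(1) by blast
    moreover from this have "f (Suc i) = insert y (f i)" using y(2) by blast
    ultimately show ?thesis by blast
  qed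
  with f show "\<exists>f. f 0 = K \<and> f (card (L - K)) = L \<and> (\<forall>i\<le>card (L - K). f i \<in> F)
      \<and> (\<forall>i<card (L - K). \<exists>q. q \<notin> f i \<and> f (Suc i) = insert q (f i))"
    unfolding d[symmetric] by (intro exI[of _ f] conjI) simp_all
qed

lemma union_closed_axiom_L2:
  assumes "union_closed F"
  shows "axiom_L2 F"
  unfolding axiom_L2_def
proof (intro ballI allI impI)
  fix K L q assume "L \<in> F" and h: "K \<subset> L \<and> q \<notin> K \<and> insert q K \<in> F"
  hence "\<Union>{L, insert q K} \<in> F"
    using assms[unfolded union_closed_def, rule_format, of "{L, insert q K}"] by simp
  moreover have "\<Union>{L, insert q K} = insert q L" using h by auto
  ultimately show "insert q L \<in> F" by simp
qed

lemma learning_space_iff_well_graded_union_closed: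
  assumes "finite (\<Union>F)" "knowledge_structure F"
  shows "learning_space F \<longleftrightarrow> well_graded F \<and> union_closed F"
proof -
  have fin: "\<forall>X\<in>F. finite X" using assms(1) by (meson Union_upper finite_subset)
  have "finite F" using assms(1) by (simp add: finite_UnionD)
  have "{} \<in> F" using assms(2) by (simp add: knowledge_structure_def)
  show ?thesis
    unfolding learning_space_def well_graded_iff_stepwise_graded[OF fin]
    using assms(2) fin \<open>finite F\<close> \<open>{} \<in> F\<close> axioms_L1_L2_union_closed
      axioms_L1_L2_stepwise_graded stepwise_graded_axiom_L1 union_closed_axiom_L2 by blast
qed

lemma union_closed_image:
  assumes "union_closed F" and "\<And>S. S \<subseteq> F \<Longrightarrow> S \<noteq> {} \<Longrightarrow> h (\<Union>S) = \<Union>(h ` S)"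
  shows "union_closed (h ` F)"
  unfolding union_closed_def
proof (intro allI impI)
  fix S assume S: "S \<subseteq> h ` F \<and> S \<noteq> {}"
  then obtain T where T: "T \<subseteq> F" "S = h ` T" by (meson subset_imageE)
  hence "T \<noteq> {}" using S by blast
  hence "\<Union>T \<in> F" using assms(1) T(1) unfolding union_closed_def by blast
  moreover have "\<Union>S = h (\<Union>T)" using assms(2)[OF T(1) \<open>T \<noteq> {}\<close>] T(2) by simp
  ultimately show "\<Union>S \<in> h ` F" by blast
qed

lemma union_closed_projection: "union_closed F \<Longrightarrow> union_closed (projection F Q')"
  unfolding projection_def by (rule union_closed_image) auto

lemma union_closed_equiv_class:
  assumes "union_closed F"
  shows "union_closed (equiv_class F Q' K)"
  unfolding union_closed_def
proof (intro allI impI)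
  fix S assume S: "S \<subseteq> equiv_class F Q' K \<and> S \<noteq> {}"
  hence "\<Union>S \<in> F" using assms unfolding union_closed_def equiv_class_def by blast
  moreover have "\<Union>S \<inter> Q' = K \<inter> Q'" using S unfolding equiv_class_def by blast
  ultimately show "\<Union>S \<in> equiv_class F Q' K" unfolding equiv_class_def by blast
qed

lemma union_closed_child: "union_closed F \<Longrightarrow> union_closed (child F Q' K)"
  unfolding child_def by (rule union_closed_image[OF union_closed_equiv_class]) auto

lemma stepwise_graded_equiv_class:
  assumes "stepwise_graded F"
  shows "stepwise_graded (equiv_class F Q' K)"
  unfolding stepwise_graded_def
proof (intro ballI impI)
  fix A B assume A: "A \<in> equiv_class F Q' K" and B: "B \<in> equiv_class F Q' K" and "A \<noteq> B"
  hence "A \<in> F" "B \<in> F" and tr: "A \<inter> Q' = K \<inter> Q'" "B \<inter> Q' = K \<inter> Q'"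
    by (auto simp: equiv_class_def)
  with assms \<open>A \<noteq> B\<close> obtain y where y: "y \<in> sym_diff A B" "sym_diff A {y} \<in> F"
    unfolding stepwise_graded_def by blast
  have "y \<notin> Q'" using y(1) tr by blast
  hence "sym_diff A {y} \<inter> Q' = K \<inter> Q'" using tr by blast
  thus "\<exists>y \<in> sym_diff A B. sym_diff A {y} \<in> equiv_class F Q' K"
    using y by (auto simp: equiv_class_def)
qed

lemma stepwise_graded_Diff_image:
  assumes "stepwise_graded F" "\<forall>L\<in>F. C \<subseteq> L"
  shows "stepwise_graded ((\<lambda>L. L - C) ` F)"
  unfolding stepwise_graded_def
proof (intro ballI impI)
  fix A' B' assume "A' \<in> (\<lambda>L. L - C) ` F" "B' \<in> (\<lambda>L. L - C) ` F" "A' \<noteq> B'"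
  then obtain A B where A: "A \<in> F" "A' = A - C" and B: "B \<in> F" "B' = B - C" and "A \<noteq> B"
    by blast
  with assms(1) obtain y where y: "y \<in> sym_diff A B" "sym_diff A {y} \<in> F"
    unfolding stepwise_graded_def by blast
  have "y \<notin> C" using y(1) A B assms(2) by blast
  hence "y \<in> sym_diff A' B'" "sym_diff A' {y} = sym_diff A {y} - C"
    using y(1) A(2) B(2) by auto
  thus "\<exists>y \<in> sym_diff A' B'. sym_diff A' {y} \<in> (\<lambda>L. L - C) ` F" using y(2) by blast
qed

lemma stepwise_graded_child: "stepwise_graded F \<Longrightarrow> stepwise_graded (child F Q' K)"
  unfolding child_def
  by (rule stepwise_graded_Diff_image[OF stepwise_graded_equiv_class]) (auto intro: Inter_lower)

lemma stepwise_graded_projection: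
  assumes sg: "stepwise_graded F" and fin: "\<forall>X\<in>F. finite X"
  shows "stepwise_graded (projection F Q')"
proof -
  have step: "\<exists>y \<in> sym_diff (K \<inter> Q') (L \<inter> Q'). sym_diff (K \<inter> Q') {y} \<in> projection F Q'"
    if "K \<in> F" "L \<in> F" "sdist K L = n" "K \<inter> Q' \<noteq> L \<inter> Q'" for n K L
    using that
  proof (induction n arbitrary: K)
    case 0
    thus ?case using fin sdist_eq_0_iff by blast
  next
    case (Suc n)
    hence "K \<noteq> L" by blast
    with sg Suc.prems(1,2) obtain y where y: "y \<in> sym_diff K L" "sym_diff K {y} \<in> F"
      unfolding stepwise_graded_def by blast
    show ?case
    proof (cases "y \<in> Q'")
      case True
      hence "sym_diff (K \<inter> Q') {y} = sym_diff K {y} \<inter> Q'" by blast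
      hence "sym_diff (K \<inter> Q') {y} \<in> projection F Q'"
        using y(2) unfolding projection_def by blast
      moreover have "y \<in> sym_diff (K \<inter> Q') (L \<inter> Q')" using True y(1) by blast
      ultimately show ?thesis by blast
    next
      case False
      \<comment> \<open>the toggle is invisible on Q', so continue from the toggled set, one step closer to L\<close>
      hence "sym_diff K {y} \<inter> Q' = K \<inter> Q'" by blast
      moreover have "sdist (sym_diff K {y}) L = n"
        using y(1) Suc.prems fin by (simp add: sdist_toggle)
      ultimately show ?thesis using Suc.IH[OF y(2) Suc.prems(2)] Suc.prems(4) by simp
    qed
  qed
  show ?thesis unfolding stepwise_graded_def
  proof (intro ballI impI)
    fix A B assume "A \<in> projection F Q'" "B \<in> projection F Q'" "A \<noteq> B"
    then obtain K L where "K \<in> F" "L \<in> F" "A = K \<inter> Q'" "B = L \<inter> Q'"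
      unfolding projection_def by blast
    thus "\<exists>y \<in> sym_diff A B. sym_diff A {y} \<in> projection F Q'"
      using step[OF _ _ refl] \<open>A \<noteq> B\<close> by simp
  qed
qed

lemma well_graded_union_closed_projection:
  assumes "\<forall>X\<in>F. finite X" "well_graded F" "union_closed F"
  shows "well_graded (projection F Q') \<and> union_closed (projection F Q')"
proof -
  have "\<forall>X\<in>projection F Q'. finite X" using assms(1) unfolding projection_def by blast
  thus ?thesis using assms
    by (simp add: well_graded_iff_stepwise_graded stepwise_graded_projection
        union_closed_projection)
qed

lemma well_graded_union_closed_child:
  assumes "\<forall>X\<in>F. finite X" "well_graded F" "union_closed F"
  shows "well_graded (child F Q' K) \<and> union_closed (child F Q' K)"
proof -
  have "\<forall>X\<in>child F Q' K. finite X" using assms(1) unfolding child_def equiv_class_def by blast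
  thus ?thesis using assms
    by (simp add: well_graded_iff_stepwise_graded stepwise_graded_child union_closed_child)
qed

lemma learning_space_projection:
  assumes "finite (\<Union>F)" "learning_space F" "\<Union>F \<inter> Q' \<noteq> {}"
  shows "learning_space (projection F Q')"
proof -
  have "{} \<in> projection F Q'"
    using assms(2) unfolding learning_space_def knowledge_structure_def projection_def by force
  moreover have "\<Union>(projection F Q') = \<Union>F \<inter> Q'" unfolding projection_def by blast
  ultimately have "knowledge_structure (projection F Q')" "finite (\<Union>(projection F Q'))"
    using assms(1,3) unfolding knowledge_structure_def by auto
  moreover have "\<forall>X\<in>F. finite X" using assms(1) by (meson Union_upper finite_subset)
  ultimately show ?thesis
    using assms(1,2) well_graded_union_closed_projection
      learning_space_iff_well_graded_union_closed
    by (metis learning_space_def)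
qed

theorem mainTheorem5:
  fixes F :: "'a set set" and Q Q' :: "'a set"
  assumes "Q = \<Union>F" and "finite Q" and "card Q \<ge> 2"
    and "Q' \<subset> Q" and "Q' \<noteq> {}"
  shows "(learning_space F \<longrightarrow> learning_space (projection F Q'))
       \<and> (well_graded F \<and> union_closed F \<longrightarrow>
            well_graded (projection F Q') \<and> union_closed (projection F Q'))
       \<and> (learning_space F \<or> (well_graded F \<and> union_closed F) \<longrightarrow>
            (\<forall>K\<in>F. well_graded (child F Q' K) \<and> union_closed (child F Q' K)))"
proof -
  have finite_Union: "finite (\<Union>F)" using assms(1,2) by simp
  hence finite_members: "\<forall>X\<in>F. finite X" by (meson Union_upper finite_subset)
  have "\<Union>F \<inter> Q' \<noteq> {}" using assms(1,4,5) by blast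
  hence "learning_space F \<longrightarrow> learning_space (projection F Q')"
    using finite_Union learning_space_projection by blast
  moreover have "learning_space F \<longrightarrow> well_graded F \<and> union_closed F"
    using finite_Union learning_space_iff_well_graded_union_closed learning_space_def by blast
  ultimately show ?thesis
    using finite_members well_graded_union_closed_projection well_graded_union_closed_child
    by blast
qed

end
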